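(* Let $X$ be a real Banach space and $1<p<\infty$. If $h^p(\Delta;X)$ has the Kadec–Klee property with respect to the topology $\beta$, then $X$ is midpoint locally uniformly convex.
   Context: $\Delta$ is the open unit disk in $\mathbb{C}$. A function $f:\Delta\to X$ is harmonic if it is twice continuously differentiable with zero Laplacian. $h^p(\Delta;X)$ is the space of harmonic $f:\Delta\to X$ with $\|f\|_p=\sup_{0\le r<1}(\frac{1}{2\pi}\int_0^{2\pi}\|f(re^{i\theta})\|^p\,d\theta)^{1/p}<\infty$. $\beta$ is the topology of norm uniform convergence on compact subsets of $\Delta$: $f_n\to f$ in $\beta$ iff $\sup_{z\in K}\|f_n(z)-f(z)\|\to0$ for every compact $K\subset\Delta$. A normed space $Y$ has the Kadec–Klee property with respect to a topology $\tau$ if whenever $x_n,x\in Y$ with $\|x_n\|=\|x\|=1$ for all $n$ and $x_n\to x$ in $\tau$, then $\|x_n-x\|\to0$. $X$ is midpoint locally uniformly convex if for every $x$ in the unit sphere and every $\epsilon>0$ there is $\delta>0$ with $\inf\{\max\{\|x+y\|,\|x-y\|\}:\|y\|\ge\epsilon\}\ge1+\delta$. *)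

theory Defs
  imports "HOL-Analysis.Analysis"
begin

text \<open>Harmonic on an (open) set S of the complex plane, viewed as R^2:
  twice continuously (Frechet) differentiable with zero Laplacian
  f_xx + f_yy = D2 f (1,1) + D2 f (i,i).\<close>
definition harmonic_on :: "(complex \<Rightarrow> 'a::real_normed_vector) \<Rightarrow> complex set \<Rightarrow> bool" where
  "harmonic_on f S \<longleftrightarrow>
     (\<exists>(D :: complex \<Rightarrow> (complex \<Rightarrow>\<^sub>L 'a)) (D2 :: complex \<Rightarrow> (complex \<Rightarrow>\<^sub>L (complex \<Rightarrow>\<^sub>L 'a))).
        (\<forall>z\<in>S. (f has_derivative blinfun_apply (D z)) (at z)) \<and>
        (\<forall>z\<in>S. (D has_derivative blinfun_apply (D2 z)) (at z)) \<and>
        continuous_on S D2 \<and>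
        (\<forall>z\<in>S. blinfun_apply (blinfun_apply (D2 z) 1) 1
               + blinfun_apply (blinfun_apply (D2 z) \<i>) \<i> = 0))"

definition hp_mean :: "real \<Rightarrow> (complex \<Rightarrow> 'a::real_normed_vector) \<Rightarrow> real \<Rightarrow> real" where
  "hp_mean p f r = (1 / (2 * pi)) * integral {0..2*pi} (\<lambda>\<theta>. norm (f (complex_of_real r * cis \<theta>)) powr p)"

definition in_hp :: "real \<Rightarrow> (complex \<Rightarrow> 'a::real_normed_vector) \<Rightarrow> bool" where
  "in_hp p f \<longleftrightarrow> harmonic_on f (ball 0 1) \<and>
     (\<forall>r\<in>{0..<1}. (\<lambda>\<theta>. norm (f (complex_of_real r * cis \<theta>)) powr p) integrable_on {0..2*pi}) \<and>
     bdd_above ((\<lambda>r. hp_mean p f r powr (1/p)) ` {0..<1})"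

definition hp_norm :: "real \<Rightarrow> (complex \<Rightarrow> 'a::real_normed_vector) \<Rightarrow> real" where
  "hp_norm p f = (SUP r\<in>{0..<1}. hp_mean p f r powr (1/p))"

definition beta_converges :: "(nat \<Rightarrow> complex \<Rightarrow> 'a::real_normed_vector) \<Rightarrow> (complex \<Rightarrow> 'a) \<Rightarrow> bool" where
  "beta_converges F f \<longleftrightarrow>
     (\<forall>K. compact K \<and> K \<subseteq> ball 0 1 \<longrightarrow> uniform_limit K F f sequentially)"

definition hp_kadec_klee_beta :: "real \<Rightarrow> 'a::real_normed_vector itself \<Rightarrow> bool" where
  "hp_kadec_klee_beta p _ \<longleftrightarrow>
     (\<forall>(F :: nat \<Rightarrow> complex \<Rightarrow> 'a) f.
        (\<forall>n. in_hp p (F n)) \<and> in_hp p f \<and>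
        (\<forall>n. hp_norm p (F n) = 1) \<and> hp_norm p f = 1 \<and> beta_converges F f
        \<longrightarrow> (\<lambda>n. hp_norm p (\<lambda>z. F n z - f z)) \<longlonglongrightarrow> 0)"

definition midpoint_LUC :: "'a::real_normed_vector itself \<Rightarrow> bool" where
  "midpoint_LUC _ \<longleftrightarrow>
     (\<forall>x::'a. norm x = 1 \<longrightarrow> (\<forall>\<epsilon>>0. \<exists>\<delta>>0.
        Inf ((\<lambda>y. max (norm (x + y)) (norm (x - y))) ` {y. norm y \<ge> \<epsilon>}) \<ge> 1 + \<delta>))"

end

theory Submission
  imports Defs
begin

text \<open>
  If \<open>X\<close> is not midpoint locally uniformly convex, there are a unit vector \<open>x\<close>, some \<open>\<epsilon> > 0\<close> and
  vectors \<open>y\<^sub>n\<close> with \<open>\<parallel>y\<^sub>n\<parallel> \<ge> \<epsilon>\<close> and \<open>max \<parallel>x + y\<^sub>n\<parallel> \<parallel>x - y\<^sub>n\<parallel> \<rightarrow> 1\<close>. The harmonic function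
  \<open>F\<^sub>n z = x + Re (z\<^sup>n\<^sup>+\<^sup>1) y\<^sub>n\<close> only takes values on the segment \<open>[x - y\<^sub>n, x + y\<^sub>n]\<close> and equals \<open>x\<close> at
  the origin, so \<open>1 \<le> \<parallel>F\<^sub>n\<parallel>\<^sub>p \<le> max \<parallel>x \<plusminus> y\<^sub>n\<parallel> \<rightarrow> 1\<close>. The normalised functions \<open>F\<^sub>n / \<parallel>F\<^sub>n\<parallel>\<^sub>p\<close>
  converge to the constant \<open>x\<close> uniformly on compact subsets of the disc, because \<open>z\<^sup>n\<^sup>+\<^sup>1 \<rightarrow> 0\<close> there,
  but not in \<open>h\<^sup>p\<close>: on the circle where \<open>r\<^sup>n\<^sup>+\<^sup>1 = 1/2\<close> the difference is of size about \<open>\<epsilon>\<close> on a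
  fixed proportion of the circle. This contradicts the Kadec-Klee property.
\<close>

lemma norm_add_scaleR_le_max:
  fixes x y :: "'a::real_normed_vector"
  assumes "\<bar>s\<bar> \<le> 1"
  shows "norm (x + s *\<^sub>R y) \<le> max (norm (x + y)) (norm (x - y))"
proof -
  let ?M = "max (norm (x + y)) (norm (x - y))"
  have "x + s *\<^sub>R y = ((1 + s) / 2) *\<^sub>R (x + y) + ((1 - s) / 2) *\<^sub>R (x - y)"
    by (simp add: scaleR_add_right scaleR_diff_right field_simps flip: scaleR_add_left scaleR_diff_left)
  then have "norm (x + s *\<^sub>R y) \<le> ((1 + s) / 2) * norm (x + y) + ((1 - s) / 2) * norm (x - y)"
    using norm_triangle_ineq[of "((1 + s) / 2) *\<^sub>R (x + y)" "((1 - s) / 2) *\<^sub>R (x - y)"] assms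
    by simp
  also have "\<dots> \<le> ((1 + s) / 2) * ?M + ((1 - s) / 2) * ?M"
    using assms by (intro add_mono mult_left_mono) auto
  finally show ?thesis by (simp add: field_simps)
qed

lemma norm_le_max_norm_add_diff:
  fixes x y :: "'a::real_normed_vector"
  shows "norm x \<le> max (norm (x + y)) (norm (x - y))"
    and "norm y \<le> max (norm (x + y)) (norm (x - y))"
  using norm_add_scaleR_le_max[of 0 x y] norm_add_scaleR_le_max[of 0 y x]
  by (simp_all add: add.commute norm_minus_commute)

lemma not_midpoint_LUC_imp_sequence:
  assumes "\<not> midpoint_LUC TYPE('a)"
  obtains x :: "'a::real_normed_vector" and \<epsilon> and Y :: "nat \<Rightarrow> 'a"
  where "norm x = 1" "0 < \<epsilon>" "\<And>n. \<epsilon> \<le> norm (Y n)"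
    "(\<lambda>n. max (norm (x + Y n)) (norm (x - Y n))) \<longlonglongrightarrow> 1"
proof -
  obtain x :: 'a and \<epsilon> where x: "norm x = 1" and \<epsilon>: "0 < \<epsilon>"
    and small: "\<And>\<delta>. 0 < \<delta> \<Longrightarrow> Inf ((\<lambda>y. max (norm (x + y)) (norm (x - y))) ` {y. \<epsilon> \<le> norm y}) < 1 + \<delta>"
    using assms unfolding midpoint_LUC_def by (auto simp: not_le)
  have "\<epsilon> *\<^sub>R x \<in> {y. \<epsilon> \<le> norm y}"
    using x \<epsilon> by simp
  then have ne: "(\<lambda>y. max (norm (x + y)) (norm (x - y))) ` {y. \<epsilon> \<le> norm y} \<noteq> {}"
    by blast
  have "\<exists>y. \<epsilon> \<le> norm y \<and> max (norm (x + y)) (norm (x - y)) < 1 + 1 / Suc n" for n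
    using cInf_lessD[OF ne small[of "1 / Suc n"]] by auto
  then obtain Y where Y: "\<And>n. \<epsilon> \<le> norm (Y n)"
    and upper: "\<And>n. max (norm (x + Y n)) (norm (x - Y n)) < 1 + 1 / Suc n"
    by metis
  have lim: "(\<lambda>n. 1 + 1 / real (Suc n)) \<longlonglongrightarrow> 1"
    using tendsto_add[OF tendsto_const LIMSEQ_Suc[OF lim_inverse_n'], of 1] by simp
  have lower: "\<forall>n. 1 \<le> max (norm (x + Y n)) (norm (x - Y n))"
    using norm_le_max_norm_add_diff(1)[of x] x by simp
  have "(\<lambda>n. max (norm (x + Y n)) (norm (x - Y n))) \<longlonglongrightarrow> 1"
    using upper by (intro tendsto_sandwich[OF always_eventually[OF lower] always_eventually
        tendsto_const lim]) (simp add: less_imp_le)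
  with x \<epsilon> Y that show ?thesis
    by blast
qed

lemma harmonic_on_real_linear_image:
  fixes L :: "complex \<Rightarrow>\<^sub>L 'a::real_normed_vector"
  assumes h: "\<And>z. z \<in> S \<Longrightarrow> (h has_field_derivative h' z) (at z)"
    and h': "\<And>z. z \<in> S \<Longrightarrow> (h' has_field_derivative h'' z) (at z)"
    and h'': "continuous_on S h''"
  shows "harmonic_on (\<lambda>z. a + L (h z)) S"
proof -
  define M where "M c = L o\<^sub>L blinfun_mult_right c" for c
  have M: "bounded_linear M"
    unfolding M_def by (intro bounded_linear_intros)
  define D where "D z = M (h' z)" for z
  define D2 where "D2 z = Blinfun M o\<^sub>L blinfun_mult_right (h'' z)" for z
  have "((\<lambda>z. a + L (h z)) has_derivative D z) (at z)" if "z \<in> S" for z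
    using has_derivative_add[OF has_derivative_const[of a] bounded_linear.has_derivative
        [OF blinfun.bounded_linear_right[of L] h[OF that, unfolded has_field_derivative_def]]]
    by (simp add: D_def M_def blinfun_compose.rep_eq o_def)
  moreover have "(D has_derivative D2 z) (at z)" if "z \<in> S" for z
    using bounded_linear.has_derivative[OF M h'[OF that, unfolded has_field_derivative_def]]
    by (simp add: D_def[abs_def] D2_def blinfun_compose.rep_eq bounded_linear_Blinfun_apply[OF M] o_def)
  moreover have "continuous_on S D2"
    unfolding D2_def by (intro continuous_intros h'')
  moreover have "D2 z 1 1 + D2 z \<i> \<i> = 0" for z
    by (simp add: D2_def M_def bounded_linear_Blinfun_apply[OF M] mult.assoc blinfun.minus_right)
  ultimately show ?thesis
    unfolding harmonic_on_def by blast
qed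

lemma hp_mean_nonneg: "0 \<le> hp_mean p F r"
  unfolding hp_mean_def
  by (cases "(\<lambda>t. norm (F (of_real r * cis t)) powr p) integrable_on {0..2*pi}")
    (auto intro!: divide_nonneg_pos integral_nonneg simp: not_integrable_integral)

lemma hp_mean_le:
  assumes "(\<lambda>t. norm (F (of_real r * cis t)) powr p) integrable_on {0..2*pi}"
    and "\<And>t. t \<in> {0..2*pi} \<Longrightarrow> norm (F (of_real r * cis t)) powr p \<le> C"
  shows "hp_mean p F r \<le> C"
proof -
  have "integral {0..2*pi} (\<lambda>t. norm (F (of_real r * cis t)) powr p) \<le> integral {0..2*pi} (\<lambda>_. C)"
    using assms by (intro integral_le) auto
  then show ?thesis
    by (simp add: hp_mean_def field_simps)
qed

lemma hp_mean_le_hp_norm: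
  assumes "in_hp p F" "r \<in> {0..<1}"
  shows "hp_mean p F r powr (1/p) \<le> hp_norm p F"
  using assms unfolding hp_norm_def in_hp_def by (intro cSUP_upper) auto

lemma hp_mean_scaleR:
  assumes "0 < p" "0 \<le> c"
  shows "hp_mean p (\<lambda>z. c *\<^sub>R F z) r powr (1/p) = c * hp_mean p F r powr (1/p)"
proof -
  have "hp_mean p (\<lambda>z. c *\<^sub>R F z) r = c powr p * hp_mean p F r"
    using assms by (simp add: hp_mean_def powr_mult)
  then show ?thesis
    using assms hp_mean_nonneg[of p F r] by (simp add: powr_mult powr_powr)
qed

lemma hp_norm_scaleR:
  assumes "0 < p" "0 \<le> c" "in_hp p F"
  shows "hp_norm p (\<lambda>z. c *\<^sub>R F z) = c * hp_norm p F"
proof -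
  let ?m = "\<lambda>r. hp_mean p F r powr (1/p)"
  have "c * Sup (?m ` {0..<1}) = (SUP s\<in>?m ` {0..<1}. c * s)"
    using assms unfolding in_hp_def
    by (intro continuous_at_Sup_mono monoI mult_left_mono continuous_intros) auto
  then show ?thesis
    unfolding hp_norm_def hp_mean_scaleR[OF assms(1,2)] by (simp add: image_image)
qed

definition re_power :: "'a::real_normed_vector \<Rightarrow> 'a \<Rightarrow> nat \<Rightarrow> complex \<Rightarrow> 'a" where
  "re_power a b k z = a + Re (z ^ k) *\<^sub>R b"

lemma harmonic_on_re_power: "harmonic_on (re_power a b k) S"
proof -
  have L: "bounded_linear (\<lambda>w. Re w *\<^sub>R b)"
    by (intro bounded_linear_compose[OF bounded_linear_scaleR_left] bounded_linear_Re)
  have "harmonic_on (\<lambda>z. a + Blinfun (\<lambda>w. Re w *\<^sub>R b) (z ^ k)) S"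
    by (rule harmonic_on_real_linear_image[where h' = "\<lambda>z. of_nat k * z ^ (k - 1)"
          and h'' = "\<lambda>z. of_nat k * (of_nat (k - 1) * z ^ (k - 1 - 1))"])
      (auto intro!: derivative_eq_intros continuous_on_mult_left continuous_on_power)
  then show ?thesis
    by (simp add: re_power_def[abs_def] bounded_linear_Blinfun_apply[OF L])
qed

lemma re_power_cis: "re_power a b k (of_real r * cis t) = a + (r ^ k * cos (real k * t)) *\<^sub>R b"
proof -
  have "(of_real r * cis t) ^ k = of_real (r ^ k) * cis (real k * t)"
    by (simp add: power_mult_distrib Complex.DeMoivre)
  then show ?thesis by (simp add: re_power_def)
qed

lemma scaleR_re_power: "c *\<^sub>R re_power a b k z = re_power (c *\<^sub>R a) (c *\<^sub>R b) k z"
  by (simp add: re_power_def scaleR_add_right)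

lemma re_power_diff: "re_power a b k z - re_power a' b' k z = re_power (a - a') (b - b') k z"
  by (simp add: re_power_def algebra_simps)

lemma re_power_zero: "re_power a 0 k = (\<lambda>z. a)"
  by (simp add: re_power_def fun_eq_iff)

lemma norm_re_power_le:
  assumes "norm z \<le> \<rho>"
  shows "norm (re_power a b k z) \<le> norm a + \<rho> ^ k * norm b"
proof -
  have "\<bar>Re (z ^ k)\<bar> \<le> \<rho> ^ k"
    using assms abs_Re_le_cmod[of "z ^ k"] power_mono[of "norm z" \<rho> k]
    by (simp add: norm_power)
  then have "norm (Re (z ^ k) *\<^sub>R b) \<le> \<rho> ^ k * norm b"
    by (simp add: mult_right_mono)
  then show ?thesis
    unfolding re_power_def by (meson add_left_mono norm_triangle_ineq order_trans)
qed

lemma integrable_re_power_cis: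
  "0 < p \<Longrightarrow> (\<lambda>t. norm (re_power a b k (of_real r * cis t)) powr p) integrable_on {0..2*pi}"
  unfolding re_power_cis
  by (intro integrable_continuous_interval continuous_on_powr' continuous_intros) auto

lemma hp_mean_re_power_le:
  assumes "0 < p" "0 \<le> r" "r \<le> 1"
  shows "hp_mean p (re_power a b k) r powr (1/p) \<le> max (norm (a + b)) (norm (a - b))"
proof -
  let ?M = "max (norm (a + b)) (norm (a - b))"
  have "hp_mean p (re_power a b k) r \<le> ?M powr p"
  proof (rule hp_mean_le[OF integrable_re_power_cis[OF \<open>0 < p\<close>]])
    fix t
    have "\<bar>r ^ k * cos (real k * t)\<bar> \<le> 1"
      using assms by (simp add: abs_mult power_le_one mult_le_one)
    then show "norm (re_power a b k (of_real r * cis t)) powr p \<le> ?M powr p"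
      unfolding re_power_cis using assms by (intro powr_mono2 norm_add_scaleR_le_max) auto
  qed
  then have "hp_mean p (re_power a b k) r powr (1/p) \<le> (?M powr p) powr (1/p)"
    using assms hp_mean_nonneg by (intro powr_mono2) auto
  also have "\<dots> = ?M"
    using assms by (simp add: powr_powr le_max_iff_disj)
  finally show ?thesis .
qed

lemma in_hp_re_power: "0 < p \<Longrightarrow> in_hp p (re_power a b k)"
  unfolding in_hp_def
  by (auto intro!: harmonic_on_re_power integrable_re_power_cis
      bdd_aboveI2[where M = "max (norm (a + b)) (norm (a - b))"] hp_mean_re_power_le)

lemma hp_norm_re_power_le: "0 < p \<Longrightarrow> hp_norm p (re_power a b k) \<le> max (norm (a + b)) (norm (a - b))"
  unfolding hp_norm_def by (intro cSUP_least) (auto intro: hp_mean_re_power_le)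

lemma norm_le_hp_norm_re_power:
  assumes "0 < p" "0 < k"
  shows "norm a \<le> hp_norm p (re_power a b k)"
proof -
  have "hp_mean p (re_power a b k) 0 = norm a powr p"
    using assms by (simp add: hp_mean_def re_power_def power_0_left)
  then have "norm a = hp_mean p (re_power a b k) 0 powr (1/p)"
    using assms by (simp add: powr_powr)
  also have "\<dots> \<le> hp_norm p (re_power a b k)"
    using assms by (intro hp_mean_le_hp_norm in_hp_re_power) auto
  finally show ?thesis .
qed

lemma in_hp_const: "0 < p \<Longrightarrow> in_hp p (\<lambda>z. a)"
  using in_hp_re_power[of p a 0] by (simp add: re_power_zero)

lemma hp_norm_const: "0 < p \<Longrightarrow> hp_norm p (\<lambda>z. a) = norm a"
  using hp_norm_re_power_le[of p a 0 1] norm_le_hp_norm_re_power[of p 1 a 0]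
  by (simp add: re_power_zero)

lemma hp_norm_re_power_tendsto_norm:
  assumes "0 < p" and lim: "(\<lambda>n. max (norm (a + b n)) (norm (a - b n))) \<longlonglongrightarrow> norm a"
  shows "(\<lambda>n. hp_norm p (re_power a (b n) (Suc n))) \<longlonglongrightarrow> norm a"
  using assms
  by (intro tendsto_sandwich[OF _ _ tendsto_const lim] always_eventually allI
      norm_le_hp_norm_re_power hp_norm_re_power_le) auto

lemma hp_norm_re_power_normalize:
  assumes "0 < p" "hp_norm p (re_power a b k) = c" "0 < c"
  shows "hp_norm p (re_power ((1 / c) *\<^sub>R a) ((1 / c) *\<^sub>R b) k) = 1"
proof -
  have "re_power ((1 / c) *\<^sub>R a) ((1 / c) *\<^sub>R b) k = (\<lambda>z. (1 / c) *\<^sub>R re_power a b k z)"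
    by (simp add: scaleR_re_power)
  then show ?thesis
    using hp_norm_scaleR[OF assms(1) _ in_hp_re_power[OF assms(1)], of "1 / c" a b k] assms(2,3)
    by simp
qed

lemma has_integral_cos_square_minus_quarter:
  assumes "0 < k"
  shows "((\<lambda>t. (cos (real k * t))\<^sup>2 - 1/4) has_integral pi / 2) {0..2*pi}"
proof -
  define F where "F t = t / 4 + sin (2 * real k * t) / (4 * real k)" for t
  have "(F has_real_derivative (cos (real k * t))\<^sup>2 - 1/4) (at t)" for t
  proof -
    have "(F has_real_derivative 1/4 + cos (2 * real k * t) / 2) (at t)"
      unfolding F_def using assms by (auto intro!: derivative_eq_intros)
    moreover have "1/4 + cos (2 * real k * t) / 2 = (cos (real k * t))\<^sup>2 - 1/4"
      using cos_double_cos[of "real k * t"] by (simp add: field_simps)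
    ultimately show ?thesis
      by simp
  qed
  then have "((\<lambda>t. (cos (real k * t))\<^sup>2 - 1/4) has_integral F (2*pi) - F 0) {0..2*pi}"
    by (intro fundamental_theorem_of_calculus)
      (auto simp flip: has_real_derivative_iff_has_vector_derivative
        intro: has_field_derivative_at_within)
  moreover have "sin (2 * real k * (2 * pi)) = 0"
    using sin_npi[of "4 * k"] by (simp add: mult_ac)
  ultimately show ?thesis
    by (simp add: F_def)
qed

text \<open>A quadratic minorant of the indicator of \<open>|s| > 1/2\<close>, chosen so that it integrates in
  closed form against \<open>s = cos (k t)\<close>.\<close>
lemma norm_add_half_scaleR_lower:
  fixes a b :: "'a::real_normed_vector"
  assumes "0 < p" "0 < \<eta>" "norm a \<le> \<eta>" "8 * \<eta> \<le> norm b" "\<bar>s\<bar> \<le> 1"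
  shows "4/3 * \<eta> powr p * (s\<^sup>2 - 1/4) \<le> norm (a + (s / 2) *\<^sub>R b) powr p"
proof (cases "s\<^sup>2 \<le> 1/4")
  case True
  then have "4/3 * \<eta> powr p * (s\<^sup>2 - 1/4) \<le> 0"
    by (intro mult_nonneg_nonpos) auto
  then show ?thesis
    by (meson order_trans powr_ge_zero)
next
  case False
  then have "(1/2)\<^sup>2 < \<bar>s\<bar>\<^sup>2"
    by (simp add: power2_eq_square)
  then have "1/2 < \<bar>s\<bar>"
    by (rule power_less_imp_less_base) simp
  then have "1/2 * norm b \<le> \<bar>s\<bar> * norm b"
    by (intro mult_right_mono) auto
  then have "2 * \<eta> \<le> norm ((s / 2) *\<^sub>R b)"
    using assms by simp
  then have "\<eta> \<le> norm (a + (s / 2) *\<^sub>R b)"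
    using norm_diff_ineq[of "(s / 2) *\<^sub>R b" a] assms by (simp add: add.commute)
  then have "\<eta> powr p \<le> norm (a + (s / 2) *\<^sub>R b) powr p"
    using assms by (intro powr_mono2) auto
  moreover have "4/3 * \<eta> powr p * (s\<^sup>2 - 1/4) \<le> \<eta> powr p"
    using assms abs_square_le_1[of s] by (simp add: algebra_simps)
  ultimately show ?thesis
    by linarith
qed

lemma hp_norm_re_power_ge:
  assumes "0 < p" "0 < k" "0 < \<eta>" "norm a \<le> \<eta>" "8 * \<eta> \<le> norm b"
  shows "(\<eta> powr p / 3) powr (1/p) \<le> hp_norm p (re_power a b k)"
proof -
  define r where "r = (1/2::real) powr (1 / real k)"
  have "r ^ k = (1/2) powr (1 / real k * real k)"
    unfolding r_def by (simp add: powr_realpow[symmetric] powr_powr)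
  then have rk: "r ^ k = 1/2"
    using assms by simp
  have "r < 1"
    using power_less_imp_less_base[of r k 1] rk by simp
  then have r: "r \<in> {0..<1}"
    unfolding r_def by simp
  have "((\<lambda>t. 4/3 * \<eta> powr p * ((cos (real k * t))\<^sup>2 - 1/4)) has_integral 4/3 * \<eta> powr p * (pi / 2))
      {0..2*pi}"
    by (intro has_integral_mult_right has_integral_cos_square_minus_quarter assms)
  then have "4/3 * \<eta> powr p * (pi / 2)
      \<le> integral {0..2*pi} (\<lambda>t. norm (re_power a b k (of_real r * cis t)) powr p)"
    by (rule has_integral_le[OF _ integrable_integral[OF integrable_re_power_cis]])
      (use assms in \<open>auto simp: re_power_cis rk intro: norm_add_half_scaleR_lower[simplified]\<close>)
  then have "\<eta> powr p / 3 \<le> hp_mean p (re_power a b k) r"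
    by (simp add: hp_mean_def field_simps)
  then have "(\<eta> powr p / 3) powr (1/p) \<le> hp_mean p (re_power a b k) r powr (1/p)"
    using assms by (intro powr_mono2) auto
  also have "\<dots> \<le> hp_norm p (re_power a b k)"
    using assms r by (intro hp_mean_le_hp_norm in_hp_re_power)
  finally show ?thesis .
qed

lemma hp_norm_re_power_diff_ge:
  assumes "0 < p" "0 < k" "norm x = 1" "0 < \<epsilon>" "\<epsilon> \<le> norm y"
    and "1 \<le> c" "c < 2" "\<bar>1 / c - 1\<bar> < \<epsilon> / 16"
  shows "((\<epsilon> / 16) powr p / 3) powr (1/p)
    \<le> hp_norm p (\<lambda>z. re_power ((1 / c) *\<^sub>R x) ((1 / c) *\<^sub>R y) k z - x)"
proof -
  have "(\<lambda>z. re_power ((1 / c) *\<^sub>R x) ((1 / c) *\<^sub>R y) k z - x)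
      = re_power ((1 / c - 1) *\<^sub>R x) ((1 / c) *\<^sub>R y) k"
    using re_power_diff[of _ _ _ _ x 0] by (simp add: fun_eq_iff re_power_zero scaleR_diff_left)
  moreover have "8 * (\<epsilon> / 16) \<le> norm ((1 / c) *\<^sub>R y)"
    using frac_le[of "norm y" \<epsilon> c 2] assms by simp
  ultimately show ?thesis
    using assms by (simp add: hp_norm_re_power_ge)
qed

lemma beta_converges_re_power:
  assumes a: "a \<longlonglongrightarrow> a0" and b: "\<And>n. norm (b n) \<le> B"
  shows "beta_converges (\<lambda>n. re_power (a n) (b n) (Suc n)) (\<lambda>z. a0)"
  unfolding beta_converges_def
proof (intro allI impI)
  fix K :: "complex set"
  assume K: "compact K \<and> K \<subseteq> ball 0 1"
  obtain \<rho> where \<rho>: "0 \<le> \<rho>" "\<rho> < 1" "\<And>z. z \<in> K \<Longrightarrow> norm z \<le> \<rho>"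
  proof (cases "K = {}")
    case False
    then obtain z0 where "z0 \<in> K" "\<And>z. z \<in> K \<Longrightarrow> norm z \<le> norm z0"
      using continuous_attains_sup[OF conjunct1[OF K] False continuous_on_norm_id] by blast
    then show ?thesis
      using K that[of "norm z0"] by auto
  qed (use that[of 0] in auto)
  define u where "u n = norm (a n - a0) + \<rho> ^ Suc n * B" for n
  have "(\<lambda>n. \<rho> ^ Suc n) \<longlonglongrightarrow> 0"
    using \<rho> by (intro LIMSEQ_Suc LIMSEQ_power_zero) simp
  then have "u \<longlonglongrightarrow> 0 + 0 * B"
    unfolding u_def by (intro tendsto_add tendsto_mult_right tendsto_norm_zero LIM_zero a)
  then have u: "u \<longlonglongrightarrow> 0"
    by simp
  have dist: "dist (re_power (a n) (b n) (Suc n) z) a0 \<le> u n" if "z \<in> K" for n z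
  proof -
    have "re_power (a n) (b n) (Suc n) z - a0 = re_power (a n - a0) (b n) (Suc n) z"
      using re_power_diff[of "a n" "b n" _ z a0 0] by (simp add: re_power_zero)
    then show ?thesis
      unfolding dist_norm u_def using norm_re_power_le[OF \<rho>(3)[OF that]] b[of n] \<rho>(1)
      by (smt (verit) mult_left_mono zero_le_power)
  qed
  show "uniform_limit K (\<lambda>n. re_power (a n) (b n) (Suc n)) (\<lambda>z. a0) sequentially"
  proof (rule uniform_limitI)
    fix e :: real
    assume "0 < e"
    with u have "\<forall>\<^sub>F n in sequentially. u n < e"
      by (rule order_tendstoD)
    then show "\<forall>\<^sub>F n in sequentially. \<forall>z\<in>K. dist (re_power (a n) (b n) (Suc n) z) a0 < e"
      by eventually_elim (auto intro: le_less_trans[OF dist])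
  qed
qed

lemma beta_converges_re_power_normalize:
  assumes c: "c \<longlonglongrightarrow> 1" and "\<And>n. 1 \<le> c n" and "\<And>n. norm (Y n) \<le> B"
  shows "beta_converges (\<lambda>n. re_power ((1 / c n) *\<^sub>R x) ((1 / c n) *\<^sub>R Y n) (Suc n)) (\<lambda>z. x)"
proof (rule beta_converges_re_power)
  show "(\<lambda>n. (1 / c n) *\<^sub>R x) \<longlonglongrightarrow> x"
    using tendsto_scaleR[OF tendsto_divide[OF tendsto_const c] tendsto_const, of 1 x] by simp
  show "norm ((1 / c n) *\<^sub>R Y n) \<le> B" for n
  proof -
    have "norm ((1 / c n) *\<^sub>R Y n) \<le> norm (Y n)"
      using assms(2)[of n] by (simp add: divide_le_eq mult_le_cancel_left1)
    also have "\<dots> \<le> B"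
      by (rule assms(3))
    finally show ?thesis .
  qed
qed

lemma not_hp_kadec_klee_beta:
  fixes x :: "'a::real_normed_vector"
  assumes p: "0 < p" and x: "norm x = 1" and \<epsilon>: "0 < \<epsilon>" and Y: "\<And>n. \<epsilon> \<le> norm (Y n)"
    and lim: "(\<lambda>n. max (norm (x + Y n)) (norm (x - Y n))) \<longlonglongrightarrow> 1"
  shows "\<not> hp_kadec_klee_beta p TYPE('a)"
proof
  assume KK: "hp_kadec_klee_beta p TYPE('a)"
  define c where "c n = hp_norm p (re_power x (Y n) (Suc n))" for n
  have c_ge: "1 \<le> c n" for n
    unfolding c_def using norm_le_hp_norm_re_power[OF p, of "Suc n" x "Y n"] x by simp
  have c: "c \<longlonglongrightarrow> 1"
    unfolding c_def using hp_norm_re_power_tendsto_norm[OF p, of x Y] lim by (simp add: x)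
  define G where "G n = re_power ((1 / c n) *\<^sub>R x) ((1 / c n) *\<^sub>R Y n) (Suc n)" for n
  have "hp_norm p (G n) = 1" for n
    unfolding G_def using c_ge[of n] by (intro hp_norm_re_power_normalize p) (simp_all add: c_def)
  moreover obtain B where "\<And>n. norm (Y n) \<le> B"
  proof -
    obtain K where K: "\<And>n. norm (max (norm (x + Y n)) (norm (x - Y n))) \<le> K"
      using convergent_imp_Bseq[OF convergentI[OF lim]] by (elim BseqE) blast
    have "norm (Y n) \<le> K" for n
      using norm_le_max_norm_add_diff(2)[where x = x and y = "Y n"] K[of n] by simp
    then show ?thesis
      by (rule that)
  qed
  then have "beta_converges G (\<lambda>z. x)"
    unfolding G_def by (rule beta_converges_re_power_normalize[OF c c_ge])
  ultimately have lim0: "(\<lambda>n. hp_norm p (\<lambda>z. G n z - x)) \<longlonglongrightarrow> 0"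
    using KK[unfolded hp_kadec_klee_beta_def, rule_format, of G "\<lambda>z. x"] p x
    by (simp add: G_def in_hp_re_power in_hp_const hp_norm_const)
  have "\<forall>\<^sub>F n in sequentially. ((\<epsilon> / 16) powr p / 3) powr (1/p) \<le> hp_norm p (\<lambda>z. G n z - x)"
  proof -
    have "(\<lambda>n. 1 / c n - 1) \<longlonglongrightarrow> 0"
      using tendsto_diff[OF tendsto_divide[OF tendsto_const c] tendsto_const, of 1 1] by simp
    then have "(\<lambda>n. \<bar>1 / c n - 1\<bar>) \<longlonglongrightarrow> 0"
      by (rule tendsto_rabs_zero)
    then have "\<forall>\<^sub>F n in sequentially. \<bar>1 / c n - 1\<bar> < \<epsilon> / 16"
      by (rule order_tendstoD(2)) (use \<epsilon> in simp)
    moreover have "\<forall>\<^sub>F n in sequentially. c n < 2"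
      using c by (rule order_tendstoD(2)) simp
    ultimately show ?thesis
      by eventually_elim (auto simp: G_def intro!: hp_norm_re_power_diff_ge p \<epsilon> x Y c_ge)
  qed
  moreover have "\<forall>\<^sub>F n in sequentially. hp_norm p (\<lambda>z. G n z - x) < ((\<epsilon> / 16) powr p / 3) powr (1/p)"
    using \<epsilon> by (intro order_tendstoD(2)[OF lim0]) simp
  ultimately have "\<forall>\<^sub>F n in sequentially. False"
    by eventually_elim simp
  then show False
    by simp
qed

theorem theorem3p4:
  fixes p :: real
  assumes "1 < p"
    and "hp_kadec_klee_beta p TYPE('a::banach)"
  shows "midpoint_LUC TYPE('a)"
proof (rule ccontr)
  assume "\<not> midpoint_LUC TYPE('a)"
  then show False
  proof (rule not_midpoint_LUC_imp_sequence)
    fix x :: 'a and \<epsilon> Y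
    assume "norm x = 1" "0 < \<epsilon>" "\<And>n. \<epsilon> \<le> norm (Y n)"
      "(\<lambda>n. max (norm (x + Y n)) (norm (x - Y n))) \<longlonglongrightarrow> 1"
    then have "\<not> hp_kadec_klee_beta p TYPE('a)"
      using \<open>1 < p\<close> by (intro not_hp_kadec_klee_beta) auto
    with assms(2) show False
      by contradiction
  qed
qed

end
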